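(* Let $\Delta \geq 0$ and let $H$ be an $n$-vertex graph with maximum degree at most $\Delta$. Then there is a collection of $t \leq 300 \sqrt{\Delta n}$ matchings $M_1, \dotsc, M_t \subseteq H$ such that (M1) each edge of $H$ belongs to exactly two of the matchings $M_1,\dots,M_t$; and (M2) for each $1 \leq i < j \leq t$, the matchings $M_i$ and $M_j$ have at most one edge in common. *)

theory Defs
  imports Complex_Main
begin

definition simple_graph :: "'a set \<Rightarrow> 'a set set \<Rightarrow> bool" where
  "simple_graph V E \<longleftrightarrow> finite V \<and> (\<forall>e\<in>E. e \<subseteq> V \<and> card e = 2)"

definition degree :: "'a set set \<Rightarrow> 'a \<Rightarrow> nat" where
  "degree E v = card {e\<in>E. v \<in> e}"

definition max_degree_le :: "'a set \<Rightarrow> 'a set set \<Rightarrow> nat \<Rightarrow> bool" where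
  "max_degree_le V E \<Delta> \<longleftrightarrow> (\<forall>v\<in>V. degree E v \<le> \<Delta>)"

definition matching_in :: "'a set set \<Rightarrow> 'a set set \<Rightarrow> bool" where
  "matching_in E M \<longleftrightarrow> M \<subseteq> E \<and> (\<forall>e1\<in>M. \<forall>e2\<in>M. e1 \<noteq> e2 \<longrightarrow> e1 \<inter> e2 = {})"

end

theory Submission
  imports Defs
begin

text \<open>Label every edge by a 2-element set of colours from \<open>{1..t}\<close>, injectively and so that
  intersecting edges get disjoint labels. Then the edges whose label contains \<open>i\<close> form a
  matching \<open>M\<^sub>i\<close>, every edge lies in exactly the two matchings named by its label, and
  \<open>M\<^sub>i \<inter> M\<^sub>j\<close> contains at most the edge labelled \<open>{i, j}\<close>. Such a labelling is found
  greedily: an edge meets at most \<open>2\<Delta>\<close> others, whose labels block at most \<open>4\<Delta>\<close> colours,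
  and the \<open>s\<close> remaining colours offer \<open>s choose 2 > |E|\<close> pairs, one of which is unused.
  Since \<open>|E| \<le> \<Delta>n\<close>, \<open>s \<approx> 2\<surd>(\<Delta>n)\<close> suffices, and replacing \<open>\<Delta>\<close> by \<open>min \<Delta> n\<close> makes
  \<open>4\<Delta> \<le> 4\<surd>(\<Delta>n)\<close>.\<close>

definition pair_labelling :: "'a set set \<Rightarrow> nat \<Rightarrow> ('a set \<Rightarrow> nat set) \<Rightarrow> bool" where
  "pair_labelling E t p \<longleftrightarrow>
     (\<forall>e\<in>E. p e \<subseteq> {1..t} \<and> card (p e) = 2) \<and> inj_on p E \<and>
     (\<forall>e\<in>E. \<forall>f\<in>E. e \<noteq> f \<and> e \<inter> f \<noteq> {} \<longrightarrow> p e \<inter> p f = {})"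

lemma pair_labellingD:
  assumes "pair_labelling E t p" and "e \<in> E"
  shows "p e \<subseteq> {1..t}" and "card (p e) = 2"
  using assms unfolding pair_labelling_def by auto

lemma matching_in_label_class:
  assumes "pair_labelling E t p"
  shows "matching_in E {e\<in>E. i \<in> p e}"
  using assms unfolding pair_labelling_def matching_in_def by blast

lemma card_label_classes_containing:
  assumes "pair_labelling E t p" and "e \<in> E"
  shows "card {i\<in>{1..t}. e \<in> {f\<in>E. i \<in> p f}} = 2"
proof -
  have "{i\<in>{1..t}. e \<in> {f\<in>E. i \<in> p f}} = p e"
    using assms unfolding pair_labelling_def by blast
  then show ?thesis
    using pair_labellingD(2)[OF assms] by simp
qed

lemma card_label_class_Int_le_1:
  assumes lab: "pair_labelling E t p" and "i \<noteq> j"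
  shows "card ({e\<in>E. i \<in> p e} \<inter> {e\<in>E. j \<in> p e}) \<le> 1"
proof -
  let ?X = "{e\<in>E. i \<in> p e} \<inter> {e\<in>E. j \<in> p e}"
  have label: "p e = {i, j}" if "e \<in> ?X" for e
  proof -
    have "card (p e) = 2" "finite (p e)"
      using pair_labellingD(2)[OF lab] that by (auto intro: card_ge_0_finite)
    moreover have "card {i, j} = 2"
      using assms(2) by simp
    ultimately show ?thesis
      using that card_subset_eq[of "p e" "{i, j}"] by auto
  qed
  have "e = f" if "e \<in> ?X" "f \<in> ?X" for e f
  proof (rule inj_onD)
    show "inj_on p E"
      using lab by (simp add: pair_labelling_def)
    show "p e = p f"
      using label[OF that(1)] label[OF that(2)] by simp
    show "e \<in> E" "f \<in> E"
      using that by simp_all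
  qed
  then have "?X = {} \<or> (\<exists>e. ?X = {e})"
    by blast
  then show ?thesis
    by (elim disjE exE) simp_all
qed

lemma exists_fresh_pair:
  assumes "finite S" and "finite Used" and "card Used < card S choose 2"
  obtains A where "A \<subseteq> S" "card A = 2" "A \<notin> Used"
proof -
  have "\<not> {A. A \<subseteq> S \<and> card A = 2} \<subseteq> Used"
  proof
    assume "{A. A \<subseteq> S \<and> card A = 2} \<subseteq> Used"
    then have "card {A. A \<subseteq> S \<and> card A = 2} \<le> card Used"
      by (rule card_mono[OF assms(2)])
    then have "card S choose 2 \<le> card Used"
      by (simp add: n_subsets assms(1))
    then show False
      using assms(3) by simp
  qed
  then show ?thesis
    using that by blast
qed

lemma pair_labelling_insertI:
  assumes lab: "pair_labelling F t p" and "x \<notin> F"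
    and A: "A \<subseteq> {1..t}" "card A = 2" "A \<notin> p ` F"
    and disj: "\<And>f. f \<in> F \<Longrightarrow> f \<inter> x \<noteq> {} \<Longrightarrow> A \<inter> p f = {}"
  shows "pair_labelling (insert x F) t (p(x := A))"
  unfolding pair_labelling_def
proof (intro conjI ballI impI)
  have "p ` F = (p(x := A)) ` F"
    using \<open>x \<notin> F\<close> by (intro image_cong) auto
  then show "inj_on (p(x := A)) (insert x F)"
    using lab A \<open>x \<notin> F\<close> by (simp add: pair_labelling_def inj_on_fun_updI)
next
  fix e assume "e \<in> insert x F"
  then show "(p(x := A)) e \<subseteq> {1..t}" "card ((p(x := A)) e) = 2"
    using lab A(1,2) by (auto simp: pair_labelling_def)
next
  fix e f assume e: "e \<in> insert x F" and f: "f \<in> insert x F" and ef: "e \<noteq> f \<and> e \<inter> f \<noteq> {}"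
  consider "e = x" "f \<in> F" | "f = x" "e \<in> F" | "e \<in> F" "f \<in> F"
    using e f ef by blast
  then show "(p(x := A)) e \<inter> (p(x := A)) f = {}"
  proof cases
    case 1
    then show ?thesis
      using disj[of f] ef \<open>x \<notin> F\<close> by (auto simp: Int_commute)
  next
    case 2
    then show ?thesis
      using disj[of e] ef \<open>x \<notin> F\<close> by (auto simp: Int_commute)
  next
    case 3
    moreover have "e \<noteq> x" "f \<noteq> x"
      using 3 \<open>x \<notin> F\<close> by auto
    ultimately show ?thesis
      using lab ef by (simp add: pair_labelling_def)
  qed
qed

lemma pair_labelling_insert:
  assumes lab: "pair_labelling F t p" and "finite F" and "x \<notin> F"
    and nbrs: "card {f\<in>F. f \<inter> x \<noteq> {}} \<le> d" and small: "card F < s choose 2"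
    and colours: "2 * d + s \<le> t"
  shows "\<exists>q. pair_labelling (insert x F) t q"
proof -
  define N where "N = {f\<in>F. f \<inter> x \<noteq> {}}"
  define S where "S = {1..t} - \<Union>(p ` N)"
  have "card (\<Union>(p ` N)) \<le> (\<Sum>f\<in>N. card (p f))"
    using \<open>finite F\<close> by (intro card_UN_le) (simp add: N_def)
  also have "\<dots> = (\<Sum>f\<in>N. 2)"
    using pair_labellingD(2)[OF lab] by (intro sum.cong) (auto simp: N_def)
  also have "\<dots> = 2 * card N"
    by simp
  finally have "card (\<Union>(p ` N)) \<le> 2 * d"
    using nbrs by (simp add: N_def)
  moreover have "\<Union>(p ` N) \<subseteq> {1..t}"
    using pair_labellingD(1)[OF lab] unfolding N_def by blast
  then have "finite (\<Union>(p ` N))"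
    using finite_subset by blast
  ultimately have "s \<le> card S"
    using diff_card_le_card_Diff[of "\<Union>(p ` N)" "{1..t}"] colours unfolding S_def by simp
  then have "card (p ` F) < card S choose 2"
    using card_image_le[OF \<open>finite F\<close>, of p] small binomial_right_mono[of s "card S" 2]
    by linarith
  moreover have "finite S"
    by (simp add: S_def)
  ultimately obtain A where A: "A \<subseteq> S" "card A = 2" "A \<notin> p ` F"
    using exists_fresh_pair[of S "p ` F"] \<open>finite F\<close> by blast
  have "pair_labelling (insert x F) t (p(x := A))"
  proof (rule pair_labelling_insertI[OF lab \<open>x \<notin> F\<close> _ A(2,3)])
    show "A \<subseteq> {1..t}"
      using A(1) unfolding S_def by blast
    show "A \<inter> p f = {}" if "f \<in> F" "f \<inter> x \<noteq> {}" for f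
      using A(1) that unfolding S_def N_def by blast
  qed
  then show ?thesis
    by blast
qed

lemma exists_pair_labelling:
  fixes E :: "'a set set"
  assumes "finite E"
    and nbrs: "\<And>e. e \<in> E \<Longrightarrow> card {f\<in>E. f \<noteq> e \<and> f \<inter> e \<noteq> {}} \<le> d"
    and small: "card E < s choose 2" and colours: "2 * d + s \<le> t"
  shows "\<exists>p. pair_labelling E t p"
proof -
  have "F \<subseteq> E \<Longrightarrow> \<exists>p. pair_labelling F t p" for F
  proof (induction F rule: infinite_finite_induct)
    case (infinite F)
    then show ?case
      using \<open>finite E\<close> finite_subset by blast
  next
    case empty
    show ?case
      by (simp add: pair_labelling_def)
  next
    case (insert x F)
    then obtain p where p: "pair_labelling F t p"
      by blast
    have "card {f\<in>F. f \<inter> x \<noteq> {}} \<le> card {f\<in>E. f \<noteq> x \<and> f \<inter> x \<noteq> {}}"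
      using insert \<open>finite E\<close> by (intro card_mono) auto
    then have nbrs_F: "card {f\<in>F. f \<inter> x \<noteq> {}} \<le> d"
      using nbrs[of x] insert.prems by simp
    have "card F < s choose 2"
      using insert card_mono[OF \<open>finite E\<close>, of F] small by simp
    then show ?case
      by (rule pair_labelling_insert[OF p insert.hyps(1,2) nbrs_F _ colours])
  qed
  then show ?thesis
    by blast
qed

lemma simple_graph_finite_edges:
  assumes "simple_graph V E"
  shows "finite E"
proof -
  have "E \<subseteq> Pow V"
    using assms by (auto simp: simple_graph_def)
  then show ?thesis
    using assms finite_subset by (auto simp: simple_graph_def)
qed

lemma simple_graph_edgeE:
  assumes "simple_graph V E" and "e \<in> E"
  obtains u v where "e = {u, v}" "u \<noteq> v" "u \<in> V" "v \<in> V"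
proof -
  have "e \<subseteq> V" "card e = 2"
    using assms by (simp_all add: simple_graph_def)
  then show ?thesis
    using that by (auto simp: card_2_iff)
qed

lemma max_degree_le_card:
  assumes "simple_graph V E"
  shows "max_degree_le V E (card V)"
  unfolding max_degree_le_def degree_def
proof
  fix v
  have "{e\<in>E. v \<in> e} \<subseteq> (\<lambda>w. {v, w}) ` V"
  proof
    fix e assume "e \<in> {e\<in>E. v \<in> e}"
    then obtain a b where "e = {a, b}" "a \<in> V" "b \<in> V" "v \<in> e"
      using simple_graph_edgeE[OF assms] by blast
    then show "e \<in> (\<lambda>w. {v, w}) ` V"
      by (auto simp: insert_commute)
  qed
  then have "card {e\<in>E. v \<in> e} \<le> card ((\<lambda>w. {v, w}) ` V)"
    using assms by (intro card_mono) (simp_all add: simple_graph_def)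
  also have "\<dots> \<le> card V"
    by (rule card_image_le) (use assms in \<open>simp add: simple_graph_def\<close>)
  finally show "card {e\<in>E. v \<in> e} \<le> card V" .
qed

lemma card_edges_le:
  assumes "simple_graph V E" and "max_degree_le V E D"
  shows "card E \<le> D * card V"
proof -
  have finV: "finite V"
    using assms(1) by (simp add: simple_graph_def)
  have "E \<subseteq> (\<Union>v\<in>V. {e\<in>E. v \<in> e})"
    using simple_graph_edgeE[OF assms(1)] by blast
  then have "card E \<le> card (\<Union>v\<in>V. {e\<in>E. v \<in> e})"
    using finV simple_graph_finite_edges[OF assms(1)] by (intro card_mono) auto
  also have "\<dots> \<le> (\<Sum>v\<in>V. degree E v)"
    unfolding degree_def using finV by (rule card_UN_le)
  also have "\<dots> \<le> D * card V"
    using assms(2) sum_bounded_above[of V "degree E" D] by (simp add: max_degree_le_def mult.commute)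
  finally show ?thesis .
qed

lemma card_adjacent_edges_le:
  assumes "simple_graph V E" and "max_degree_le V E D" and "e \<in> E"
  shows "card {f\<in>E. f \<noteq> e \<and> f \<inter> e \<noteq> {}} \<le> 2 * D"
proof -
  obtain u v where e: "e = {u, v}" "u \<in> V" "v \<in> V"
    using simple_graph_edgeE[OF assms(1,3)] by blast
  have "{f\<in>E. f \<noteq> e \<and> f \<inter> e \<noteq> {}} \<subseteq> {f\<in>E. u \<in> f} \<union> {f\<in>E. v \<in> f}"
    using e by auto
  then have "card {f\<in>E. f \<noteq> e \<and> f \<inter> e \<noteq> {}} \<le> card ({f\<in>E. u \<in> f} \<union> {f\<in>E. v \<in> f})"
    using simple_graph_finite_edges[OF assms(1)] by (intro card_mono) auto
  also have "\<dots> \<le> degree E u + degree E v"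
    unfolding degree_def by (rule card_Un_le)
  also have "\<dots> \<le> 2 * D"
    using assms(2) e(2,3) unfolding max_degree_le_def by (metis add_mono mult_2)
  finally show ?thesis .
qed

lemma exists_choose_two_gt:
  fixes m :: nat
  obtains s where "m < s choose 2" and "real s \<le> 2 * sqrt m + 4"
proof
  define r where "r = nat \<lceil>sqrt m\<rceil>"
  have "real r = of_int \<lceil>sqrt m\<rceil>"
    by (simp add: r_def)
  then have root_le: "sqrt m \<le> r" and root_gt: "r < sqrt m + 1"
    using ceiling_correct[of "sqrt m"] by linarith+
  from root_le have "real m \<le> real r ^ 2"
    by (rule sqrt_le_D)
  then have "m \<le> r * r"
    by (metis of_nat_le_iff of_nat_power power2_eq_square)
  also have "\<dots> < (2 * r + 2) choose 2"
    by (simp add: choose_two algebra_simps)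
  finally show "m < (2 * r + 2) choose 2" .
  show "real (2 * r + 2) \<le> 2 * sqrt m + 4"
    using root_gt by simp
qed

lemma simple_graph_pair_labelling:
  assumes graph: "simple_graph V E" and deg: "max_degree_le V E D"
    and "D \<le> card V" and "E \<noteq> {}"
  obtains t p where "pair_labelling E t p" and "real t \<le> 10 * sqrt (real D * real (card V))"
proof -
  let ?root = "sqrt (real D * real (card V))"
  have "1 \<le> card E"
    using \<open>E \<noteq> {}\<close> simple_graph_finite_edges[OF graph] by (simp add: Suc_le_eq card_gt_0_iff)
  also have edges: "card E \<le> D * card V"
    by (rule card_edges_le[OF graph deg])
  finally have "1 \<le> real D * real (card V)"
    by (metis of_nat_1 of_nat_le_iff of_nat_mult)
  then have root_ge_1: "1 \<le> ?root"
    by (rule real_sqrt_ge_one)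
  have D_le_root: "real D \<le> ?root"
    by (rule real_le_rsqrt) (simp add: power2_eq_square \<open>D \<le> card V\<close> mult_left_mono)
  obtain s where s: "D * card V < s choose 2" "real s \<le> 2 * sqrt (real (D * card V)) + 4"
    by (rule exists_choose_two_gt)
  have "card E < s choose 2"
    using edges s(1) by linarith
  then obtain p where "pair_labelling E (2 * (2 * D) + s) p"
    using exists_pair_labelling[OF simple_graph_finite_edges[OF graph]
        card_adjacent_edges_le[OF graph deg]] by blast
  moreover have "real (2 * (2 * D) + s) \<le> 10 * ?root"
  proof -
    have "real s \<le> 2 * ?root + 4"
      using s(2) by simp
    then show ?thesis
      using D_le_root root_ge_1 by linarith
  qed
  ultimately show ?thesis
    using that by blast
qed

theorem lemma6p1:
  fixes V :: "'a set" and E :: "'a set set" and n \<Delta> :: nat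
  assumes "simple_graph V E" and "card V = n" and "max_degree_le V E \<Delta>"
  shows "\<exists>(t::nat) (M :: nat \<Rightarrow> 'a set set).
           real t \<le> 300 * sqrt (real \<Delta> * real n)
         \<and> (\<forall>i\<in>{1..t}. matching_in E (M i))
         \<and> (\<forall>e\<in>E. card {i\<in>{1..t}. e \<in> M i} = 2)
         \<and> (\<forall>i\<in>{1..t}. \<forall>j\<in>{1..t}. i < j \<longrightarrow> card (M i \<inter> M j) \<le> 1)"
proof (cases "E = {}")
  case True
  show ?thesis
    by (rule exI[of _ 0], rule exI[of _ "\<lambda>_. {}"]) (simp add: True)
next
  case False
  have "max_degree_le V E (min \<Delta> n)"
    using assms(2,3) max_degree_le_card[OF assms(1)] by (auto simp: max_degree_le_def)
  then obtain t p where p: "pair_labelling E t p"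
    and t: "real t \<le> 10 * sqrt (real (min \<Delta> n) * real n)"
    using simple_graph_pair_labelling[OF assms(1)] False assms(2) by (metis min.cobounded2)
  have "sqrt (real (min \<Delta> n) * real n) \<le> sqrt (real \<Delta> * real n)"
    by (simp add: mult_right_mono)
  with t have "real t \<le> 300 * sqrt (real \<Delta> * real n)"
    by linarith
  then show ?thesis
    using matching_in_label_class[OF p] card_label_classes_containing[OF p]
      card_label_class_Int_le_1[OF p]
    by (intro exI[of _ t] exI[of _ "\<lambda>i. {e\<in>E. i \<in> p e}"]) (simp add: less_imp_neq)
qed

end
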